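(* Every ado-semilattice $(S,\sqcup,\cap)$ is a $\curlyvee$-algebra when one defines $a\curlyvee b=(a\sqcup b)\cap(b\sqcup a)$. Consequently, every functional algebra of signature $(\curlyvee)$ is a $\curlyvee$-algebra.
   Context: An o-semilattice is an algebra $(L,\cap,\sqcup)$ such that $(L,\cap)$ is a semilattice and, with $x\leq y$ iff $x=x\cap y$, for all $x,y,z$: (i) $x\leq x\sqcup y$; (ii) $(x\cap y)\sqcup(y\cap z)\leq y$; (iii) $x\sqcup y\leq x\sqcup(y\cap(x\sqcup y))$; (iv) $x\cap z\leq(x\cap y)\sqcup z$. It is distributive if $(a\cap d)\sqcup((b\cap d)\cap(c\cap d))=((a\cap d)\sqcup(b\cap d))\cap((a\cap d)\sqcup(c\cap d))$ for all $a,b,c,d$. An ado-semilattice is a distributive o-semilattice in which $\sqcup$ is associative. A left regular band is a set with a binary operation $\sqcup$ satisfying $a\sqcup(b\sqcup c)=(a\sqcup b)\sqcup c$, $a\sqcup a=a$, $a\sqcup b=(a\sqcup b)\sqcup a$; write $a\lesssim b$ iff $b\sqcup a=b$. A $\curlyvee$-algebra is an algebra $(S,\curlyvee)$ such that, defining $a\sqcup b=a\curlyvee(a\curlyvee b)$: $(S,\sqcup)$ is a left regular band; $\curlyvee$ is commutative and idempotent; $(a\curlyvee b)\sqcup(a\sqcup b)=a\sqcup b$; $a\sqcup(b\curlyvee c)=(a\sqcup b)\curlyvee(a\sqcup c)$; and if $d\lesssim a,b,c,a\curlyvee b,b\curlyvee c$ then $d\lesssim a\curlyvee c$. For sets $X,Y$,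 $\mathrm{Par}(X,Y)$ is the set of partial functions $X\to Y$ as sets of pairs; for $f,g$, $g-f$ is the restriction of $g$ to $X\setminus\mathrm{dom}(f)$ and restricted union is $f\curlyvee g=(f-g)\cup(f\cap g)\cup(g-f)$. A functional algebra of signature $(\curlyvee)$ is one isomorphic to $(A,\curlyvee)$ with $A\subseteq\mathrm{Par}(X,Y)$ closed under restricted union. *)

theory Defs
  imports Main
begin

definition meet_semilattice :: "'a set \<Rightarrow> ('a \<Rightarrow> 'a \<Rightarrow> 'a) \<Rightarrow> bool" where
  "meet_semilattice S m \<longleftrightarrow>
     (\<forall>x\<in>S. \<forall>y\<in>S. m x y \<in> S) \<and>
     (\<forall>x\<in>S. \<forall>y\<in>S. \<forall>z\<in>S. m (m x y) z = m x (m y z)) \<and>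
     (\<forall>x\<in>S. \<forall>y\<in>S. m x y = m y x) \<and>
     (\<forall>x\<in>S. m x x = x)"

definition sl_le :: "('a \<Rightarrow> 'a \<Rightarrow> 'a) \<Rightarrow> 'a \<Rightarrow> 'a \<Rightarrow> bool" where
  "sl_le m x y \<longleftrightarrow> x = m x y"

definition o_semilattice :: "'a set \<Rightarrow> ('a \<Rightarrow> 'a \<Rightarrow> 'a) \<Rightarrow> ('a \<Rightarrow> 'a \<Rightarrow> 'a) \<Rightarrow> bool" where
  "o_semilattice S m j \<longleftrightarrow>
     meet_semilattice S m \<and>
     (\<forall>x\<in>S. \<forall>y\<in>S. j x y \<in> S) \<and>
     (\<forall>x\<in>S. \<forall>y\<in>S. sl_le m x (j x y)) \<and>
     (\<forall>x\<in>S. \<forall>y\<in>S. \<forall>z\<in>S. sl_le m (j (m x y) (m y z)) y) \<and>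
     (\<forall>x\<in>S. \<forall>y\<in>S. sl_le m (j x y) (j x (m y (j x y)))) \<and>
     (\<forall>x\<in>S. \<forall>y\<in>S. \<forall>z\<in>S. sl_le m (m x z) (j (m x y) z))"

definition distributive_os :: "'a set \<Rightarrow> ('a \<Rightarrow> 'a \<Rightarrow> 'a) \<Rightarrow> ('a \<Rightarrow> 'a \<Rightarrow> 'a) \<Rightarrow> bool" where
  "distributive_os S m j \<longleftrightarrow>
     (\<forall>a\<in>S. \<forall>b\<in>S. \<forall>c\<in>S. \<forall>d\<in>S.
        j (m a d) (m (m b d) (m c d)) = m (j (m a d) (m b d)) (j (m a d) (m c d)))"

definition ado_semilattice :: "'a set \<Rightarrow> ('a \<Rightarrow> 'a \<Rightarrow> 'a) \<Rightarrow> ('a \<Rightarrow> 'a \<Rightarrow> 'a) \<Rightarrow> bool" where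
  "ado_semilattice S m j \<longleftrightarrow>
     o_semilattice S m j \<and> distributive_os S m j \<and>
     (\<forall>a\<in>S. \<forall>b\<in>S. \<forall>c\<in>S. j a (j b c) = j (j a b) c)"

definition left_regular_band :: "'a set \<Rightarrow> ('a \<Rightarrow> 'a \<Rightarrow> 'a) \<Rightarrow> bool" where
  "left_regular_band S j \<longleftrightarrow>
     (\<forall>a\<in>S. \<forall>b\<in>S. j a b \<in> S) \<and>
     (\<forall>a\<in>S. \<forall>b\<in>S. \<forall>c\<in>S. j a (j b c) = j (j a b) c) \<and>
     (\<forall>a\<in>S. j a a = a) \<and>
     (\<forall>a\<in>S. \<forall>b\<in>S. j a b = j (j a b) a)"

definition lrb_le :: "('a \<Rightarrow> 'a \<Rightarrow> 'a) \<Rightarrow> 'a \<Rightarrow> 'a \<Rightarrow> bool" where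
  "lrb_le j a b \<longleftrightarrow> j b a = b"

definition vee_join :: "('a \<Rightarrow> 'a \<Rightarrow> 'a) \<Rightarrow> 'a \<Rightarrow> 'a \<Rightarrow> 'a" where
  "vee_join v a b = v a (v a b)"

definition vee_algebra :: "'a set \<Rightarrow> ('a \<Rightarrow> 'a \<Rightarrow> 'a) \<Rightarrow> bool" where
  "vee_algebra S v \<longleftrightarrow>
     (\<forall>a\<in>S. \<forall>b\<in>S. v a b \<in> S) \<and>
     left_regular_band S (vee_join v) \<and>
     (\<forall>a\<in>S. \<forall>b\<in>S. v a b = v b a) \<and>
     (\<forall>a\<in>S. v a a = a) \<and>
     (\<forall>a\<in>S. \<forall>b\<in>S. vee_join v (v a b) (vee_join v a b) = vee_join v a b) \<and>
     (\<forall>a\<in>S. \<forall>b\<in>S. \<forall>c\<in>S.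
        vee_join v a (v b c) = v (vee_join v a b) (vee_join v a c)) \<and>
     (\<forall>a\<in>S. \<forall>b\<in>S. \<forall>c\<in>S. \<forall>d\<in>S.
        lrb_le (vee_join v) d a \<and> lrb_le (vee_join v) d b \<and> lrb_le (vee_join v) d c \<and>
        lrb_le (vee_join v) d (v a b) \<and> lrb_le (vee_join v) d (v b c)
        \<longrightarrow> lrb_le (vee_join v) d (v a c))"

definition Par :: "'x set \<Rightarrow> 'y set \<Rightarrow> ('x \<times> 'y) set set" where
  "Par X Y = {f. f \<subseteq> X \<times> Y \<and> single_valued f}"

definition rdiff :: "('x \<times> 'y) set \<Rightarrow> ('x \<times> 'y) set \<Rightarrow> ('x \<times> 'y) set" where
  "rdiff g f = {p \<in> g. fst p \<notin> Domain f}"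

definition runion :: "('x \<times> 'y) set \<Rightarrow> ('x \<times> 'y) set \<Rightarrow> ('x \<times> 'y) set" where
  "runion f g = rdiff f g \<union> (f \<inter> g) \<union> rdiff g f"

definition functional_vee_algebra :: "'a set \<Rightarrow> ('a \<Rightarrow> 'a \<Rightarrow> 'a) \<Rightarrow> 'x set \<Rightarrow> 'y set
    \<Rightarrow> ('x \<times> 'y) set set \<Rightarrow> ('a \<Rightarrow> ('x \<times> 'y) set) \<Rightarrow> bool" where
  "functional_vee_algebra S v X Y A h \<longleftrightarrow>
     (\<forall>a\<in>S. \<forall>b\<in>S. v a b \<in> S) \<and>
     A \<subseteq> Par X Y \<and> (\<forall>f\<in>A. \<forall>g\<in>A. runion f g \<in> A) \<and>
     bij_betw h S A \<and> (\<forall>a\<in>S. \<forall>b\<in>S. h (v a b) = runion (h a) (h b))"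

end

(*
  In a distributive o-semilattice the left distributive law x \<squnion> (y \<sqinter> z) = (x \<squnion> y) \<sqinter> (x \<squnion> z)
  holds unconditionally, and it yields x \<curlyvee> (x \<curlyvee> y) = x \<squnion> y. Hence the join derived from \<curlyvee>
  is \<squnion> itself, and the equational axioms of a \<curlyvee>-algebra reduce to associativity of \<squnion>,
  left distributivity and x \<curlyvee> y \<preceq> x \<squnion> y. For the quasi-identity, read d \<lesssim> x (that is, x \<squnion> d = x) as
  "dom d \<subseteq> dom x": the set of such x is upward closed and, with associativity, closed under
  meets of elements with a common upper bound. From d \<lesssim> x, y, x \<curlyvee> y one gets d \<lesssim> x \<sqinter> y, so
  the hypotheses give d \<lesssim> a \<sqinter> b \<sqinter> c \<preceq> a \<curlyvee> c.

  Restricted union on single-valued relations is a \<curlyvee>-algebra whose derived join is override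
  (f on dom f, g elsewhere). The axioms of a \<curlyvee>-algebra are quasi-identities, so they pass
  along injective homomorphisms, which covers every functional algebra.
*)
theory Submission
  imports Defs
begin

locale o_slattice =
  fixes S :: "'a set"
    and meet :: "'a \<Rightarrow> 'a \<Rightarrow> 'a" (infixl "\<sqinter>" 70)
    and join :: "'a \<Rightarrow> 'a \<Rightarrow> 'a" (infixl "\<squnion>" 65)
  assumes o_semilattice: "o_semilattice S meet join"
begin

abbreviation le :: "'a \<Rightarrow> 'a \<Rightarrow> bool" (infix "\<preceq>" 50) where
  "x \<preceq> y \<equiv> sl_le meet x y"

lemma meet_closed [simp]: "x \<in> S \<Longrightarrow> y \<in> S \<Longrightarrow> x \<sqinter> y \<in> S"
  and join_closed [simp]: "x \<in> S \<Longrightarrow> y \<in> S \<Longrightarrow> x \<squnion> y \<in> S"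
  and meet_assoc: "x \<in> S \<Longrightarrow> y \<in> S \<Longrightarrow> z \<in> S \<Longrightarrow> x \<sqinter> y \<sqinter> z = x \<sqinter> (y \<sqinter> z)"
  and meet_commute: "x \<in> S \<Longrightarrow> y \<in> S \<Longrightarrow> x \<sqinter> y = y \<sqinter> x"
  and meet_idem [simp]: "x \<in> S \<Longrightarrow> x \<sqinter> x = x"
  using o_semilattice unfolding o_semilattice_def meet_semilattice_def by auto

lemma le_join: "x \<in> S \<Longrightarrow> y \<in> S \<Longrightarrow> x \<preceq> x \<squnion> y"
  and join_meets_le: "x \<in> S \<Longrightarrow> y \<in> S \<Longrightarrow> z \<in> S \<Longrightarrow> (x \<sqinter> y) \<squnion> (y \<sqinter> z) \<preceq> y"
  and join_le_join_meet_join: "x \<in> S \<Longrightarrow> y \<in> S \<Longrightarrow> x \<squnion> y \<preceq> x \<squnion> (y \<sqinter> (x \<squnion> y))"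
  and meet_le_join_meet: "x \<in> S \<Longrightarrow> y \<in> S \<Longrightarrow> z \<in> S \<Longrightarrow> x \<sqinter> z \<preceq> (x \<sqinter> y) \<squnion> z"
  using o_semilattice unfolding o_semilattice_def by blast+

lemma meet_left_commute: "x \<in> S \<Longrightarrow> y \<in> S \<Longrightarrow> z \<in> S \<Longrightarrow> x \<sqinter> (y \<sqinter> z) = y \<sqinter> (x \<sqinter> z)"
  by (metis meet_assoc meet_commute)

lemma meet_left_idem: "x \<in> S \<Longrightarrow> y \<in> S \<Longrightarrow> x \<sqinter> (x \<sqinter> y) = x \<sqinter> y"
  by (metis meet_assoc meet_idem)

lemmas meet_ac = meet_assoc meet_commute meet_left_commute meet_left_idem

lemma le_iff_meet: "x \<preceq> y \<longleftrightarrow> x \<sqinter> y = x"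
  unfolding sl_le_def by auto

lemma le_iff_meet': "x \<in> S \<Longrightarrow> y \<in> S \<Longrightarrow> x \<preceq> y \<longleftrightarrow> y \<sqinter> x = x"
  by (simp add: le_iff_meet meet_commute)

lemma le_refl [simp]: "x \<in> S \<Longrightarrow> x \<preceq> x"
  by (simp add: le_iff_meet)

lemma le_trans: "x \<in> S \<Longrightarrow> y \<in> S \<Longrightarrow> z \<in> S \<Longrightarrow> x \<preceq> y \<Longrightarrow> y \<preceq> z \<Longrightarrow> x \<preceq> z"
  unfolding le_iff_meet by (metis meet_assoc)

lemma le_antisym: "x \<in> S \<Longrightarrow> y \<in> S \<Longrightarrow> x \<preceq> y \<Longrightarrow> y \<preceq> x \<Longrightarrow> x = y"
  unfolding le_iff_meet by (metis meet_commute)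

lemma meet_le1 [simp]: "x \<in> S \<Longrightarrow> y \<in> S \<Longrightarrow> x \<sqinter> y \<preceq> x"
  unfolding le_iff_meet by (metis meet_assoc meet_commute meet_idem)

lemma meet_le2 [simp]: "x \<in> S \<Longrightarrow> y \<in> S \<Longrightarrow> x \<sqinter> y \<preceq> y"
  unfolding le_iff_meet by (metis meet_assoc meet_idem)

lemma le_meet_iff: "x \<in> S \<Longrightarrow> y \<in> S \<Longrightarrow> z \<in> S \<Longrightarrow> x \<preceq> y \<sqinter> z \<longleftrightarrow> x \<preceq> y \<and> x \<preceq> z"
  by (metis le_iff_meet le_trans meet_assoc meet_closed meet_le1 meet_le2)

lemma join_idem [simp]: "x \<in> S \<Longrightarrow> x \<squnion> x = x"
  by (metis join_closed join_meets_le le_antisym le_join meet_idem)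

lemma join_least: "x \<in> S \<Longrightarrow> y \<in> S \<Longrightarrow> z \<in> S \<Longrightarrow> x \<preceq> z \<Longrightarrow> y \<preceq> z \<Longrightarrow> x \<squnion> y \<preceq> z"
  using join_meets_le[of x z y] by (metis le_iff_meet le_iff_meet')

lemma join_absorb_left: "x \<in> S \<Longrightarrow> y \<in> S \<Longrightarrow> x \<preceq> y \<Longrightarrow> y \<squnion> x = y"
  by (metis join_closed join_least le_antisym le_join le_refl)

lemma join_absorb_right: "x \<in> S \<Longrightarrow> y \<in> S \<Longrightarrow> x \<preceq> y \<Longrightarrow> x \<squnion> y = y"
  by (metis join_closed join_least le_antisym le_iff_meet' le_refl meet_le_join_meet meet_idem)

lemma join_join_left: "x \<in> S \<Longrightarrow> y \<in> S \<Longrightarrow> x \<squnion> y \<squnion> x = x \<squnion> y"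
  by (simp add: join_absorb_left le_join)

lemma meet_le_join_of_le: "x \<in> S \<Longrightarrow> y \<in> S \<Longrightarrow> z \<in> S \<Longrightarrow> y \<preceq> x \<Longrightarrow> x \<sqinter> z \<preceq> y \<squnion> z"
  by (metis le_iff_meet' meet_le_join_meet)

lemma join_commute_bounded:
  assumes "x \<in> S" "y \<in> S" "z \<in> S" "x \<preceq> z" "y \<preceq> z"
  shows "x \<squnion> y = y \<squnion> x"
proof -
  have "x \<squnion> y \<preceq> y \<squnion> x" if "x \<in> S" "y \<in> S" "x \<preceq> z" "y \<preceq> z" for x y
  proof -
    have "z \<sqinter> x \<preceq> y \<squnion> x"
      using meet_le_join_of_le that \<open>z \<in> S\<close> by blast
    then have "x \<preceq> y \<squnion> x"
      using that \<open>z \<in> S\<close> le_iff_meet' by metis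
    then show ?thesis
      using that join_least le_join by simp
  qed
  then show ?thesis
    using assms le_antisym by (meson join_closed)
qed

lemma le_if_join_absorbs:
  assumes "p \<in> S" "t \<in> S" "p \<squnion> t = p" "p \<preceq> t \<squnion> p"
  shows "t \<preceq> p"
proof -
  have "t \<squnion> p = p \<squnion> t"
    using join_commute_bounded[of t p "t \<squnion> p"] assms le_join by simp
  then show ?thesis
    using assms le_join by metis
qed

abbreviation vee :: "'a \<Rightarrow> 'a \<Rightarrow> 'a" (infixl "\<curlyvee>" 65) where
  "x \<curlyvee> y \<equiv> (x \<squnion> y) \<sqinter> (y \<squnion> x)"

lemma meet_le_vee: "x \<in> S \<Longrightarrow> y \<in> S \<Longrightarrow> x \<sqinter> y \<preceq> x \<curlyvee> y"
  using le_join le_meet_iff le_trans[OF _ _ _ meet_le1] le_trans[OF _ _ _ meet_le2] by simp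

end

locale distrib_o_slattice = o_slattice +
  assumes distributive: "distributive_os S meet join"
begin

lemma join_meet_distrib_below:
  assumes "a \<in> S" "b \<in> S" "c \<in> S" "d \<in> S" "a \<preceq> d" "b \<preceq> d" "c \<preceq> d"
  shows "a \<squnion> (b \<sqinter> c) = (a \<squnion> b) \<sqinter> (a \<squnion> c)"
  using distributive assms unfolding distributive_os_def by (metis le_iff_meet)

lemma join_mono_right:
  assumes "x \<in> S" "y \<in> S" "z \<in> S" "y \<preceq> z"
  shows "x \<squnion> y \<preceq> x \<squnion> z"
proof -
  define u where "u = y \<sqinter> (x \<squnion> y)"
  define v where "v = (x \<squnion> y) \<sqinter> z"
  have uv: "u \<in> S" "v \<in> S" "u \<preceq> v" "u \<preceq> x \<squnion> y" "v \<preceq> x \<squnion> y"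
    using assms unfolding u_def v_def by (auto simp: le_meet_iff intro: le_trans)
  have "x \<squnion> y \<preceq> x \<squnion> u"
    using join_le_join_meet_join assms u_def by blast
  moreover have "x \<squnion> u \<preceq> x \<squnion> v"
  proof -
    have "x \<squnion> u = (x \<squnion> u) \<sqinter> (x \<squnion> v)"
      using join_meet_distrib_below[of x u v "x \<squnion> y"] uv assms le_join
      by (simp add: le_iff_meet)
    then show ?thesis
      by (simp add: le_iff_meet)
  qed
  moreover have "x \<squnion> v \<preceq> x \<squnion> z"
    using assms uv join_least le_join meet_le_join_of_le[of "x \<squnion> y" x z]
    unfolding v_def by simp
  ultimately show ?thesis
    using assms uv by (metis join_closed le_trans)
qed

lemma join_meet_join:
  assumes "a \<in> S" "p \<in> S"
  shows "a \<squnion> (p \<sqinter> (a \<squnion> p)) = a \<squnion> p"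
  using assms join_le_join_meet_join join_mono_right[of a "p \<sqinter> (a \<squnion> p)" p]
  by (metis join_closed le_antisym meet_closed meet_le1)

lemma join_meet_eq_if_between:
  assumes "a \<in> S" "p \<in> S" "w \<in> S" "a \<preceq> w" "w \<preceq> a \<squnion> p"
  shows "a \<squnion> (p \<sqinter> w) = w"
proof -
  define e where "e = a \<squnion> p"
  have "e \<in> S" "p \<sqinter> e \<in> S" "a \<preceq> e" "p \<sqinter> e \<preceq> e"
    using assms le_join by (simp_all add: e_def)
  then have "a \<squnion> ((p \<sqinter> e) \<sqinter> w) = (a \<squnion> (p \<sqinter> e)) \<sqinter> (a \<squnion> w)"
    using join_meet_distrib_below[of a "p \<sqinter> e" w e] assms by (simp add: e_def)
  also have "\<dots> = e \<sqinter> w"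
    using assms join_meet_join join_absorb_right by (simp add: e_def)
  also have "\<dots> = w"
    using assms \<open>e \<in> S\<close> le_iff_meet' by (simp add: e_def)
  finally show ?thesis
    using assms \<open>e \<in> S\<close> by (metis e_def le_iff_meet' meet_assoc)
qed

lemma join_meet_distrib:
  assumes "a \<in> S" "p \<in> S" "q \<in> S"
  shows "a \<squnion> (p \<sqinter> q) = (a \<squnion> p) \<sqinter> (a \<squnion> q)"
proof -
  define w where "w = (a \<squnion> p) \<sqinter> (a \<squnion> q)"
  have w: "w \<in> S" "a \<preceq> w" "w \<preceq> a \<squnion> p" "w \<preceq> a \<squnion> q"
    using assms le_join le_meet_iff unfolding w_def by simp_all
  have "a \<squnion> (p \<sqinter> q) \<preceq> w"
    using assms join_mono_right le_meet_iff unfolding w_def by simp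
  moreover have "w \<preceq> a \<squnion> (p \<sqinter> q)"
  proof -
    have "a \<squnion> ((p \<sqinter> w) \<sqinter> (q \<sqinter> w)) = (a \<squnion> (p \<sqinter> w)) \<sqinter> (a \<squnion> (q \<sqinter> w))"
      using join_meet_distrib_below[of a "p \<sqinter> w" "q \<sqinter> w" w] assms w by simp
    also have "\<dots> = w"
      using join_meet_eq_if_between[of a _ w] assms w by simp
    finally have "a \<squnion> ((p \<sqinter> w) \<sqinter> (q \<sqinter> w)) = w" .
    moreover have "(p \<sqinter> w) \<sqinter> (q \<sqinter> w) \<preceq> p \<sqinter> q"
      using assms w le_trans[OF _ _ _ meet_le1 meet_le1] le_trans[OF _ _ _ meet_le2 meet_le1]
      by (simp add: le_meet_iff)
    ultimately show ?thesis
      using join_mono_right[of a _ "p \<sqinter> q"] assms w by (metis meet_closed)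
  qed
  ultimately show ?thesis
    using assms w le_antisym unfolding w_def by (metis join_closed meet_closed)
qed

lemma vee_vee_self:
  assumes "a \<in> S" "b \<in> S"
  shows "a \<curlyvee> (a \<curlyvee> b) = a \<squnion> b"
proof -
  define c where "c = a \<curlyvee> b"
  have c: "c \<in> S" "c \<preceq> a \<squnion> b"
    using assms by (simp_all add: c_def)
  have "a \<squnion> c \<preceq> a \<squnion> b"
    using join_mono_right[of a c "a \<squnion> b"] join_absorb_right[of a "a \<squnion> b"] assms c le_join
    by simp
  moreover have "a \<squnion> b \<preceq> a \<squnion> c"
  proof -
    have "b \<sqinter> (a \<squnion> b) \<preceq> c"
      using assms le_join[of b a] le_trans[OF _ _ _ meet_le1, of b "a \<squnion> b" "b \<squnion> a"]
      unfolding c_def by (simp add: le_meet_iff)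
    then show ?thesis
      using join_mono_right[of a "b \<sqinter> (a \<squnion> b)" c] join_meet_join assms c by simp
  qed
  ultimately have ac: "a \<squnion> c = a \<squnion> b"
    using assms c le_antisym by (metis join_closed)
  have "(a \<squnion> b) \<sqinter> a \<preceq> c \<squnion> a"
    using meet_le_join_meet[of "a \<squnion> b" "b \<squnion> a" a] assms unfolding c_def by simp
  moreover have "(a \<squnion> b) \<sqinter> a = a"
    using assms le_join le_iff_meet' by simp
  ultimately have "a \<preceq> c \<squnion> a"
    by simp
  then have "c \<squnion> a = a \<squnion> c"
    using join_commute_bounded[of c a "c \<squnion> a"] assms c le_join by simp
  then show ?thesis
    using ac assms by (simp add: c_def)
qed

lemma vee_join_eq_join: "a \<in> S \<Longrightarrow> b \<in> S \<Longrightarrow> vee_join (\<curlyvee>) a b = a \<squnion> b"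
  unfolding vee_join_def by (rule vee_vee_self)

end

locale ado_slattice = distrib_o_slattice +
  assumes join_assoc: "x \<in> S \<Longrightarrow> y \<in> S \<Longrightarrow> z \<in> S \<Longrightarrow> x \<squnion> (y \<squnion> z) = x \<squnion> y \<squnion> z"
begin

abbreviation lrb_le_join :: "'a \<Rightarrow> 'a \<Rightarrow> bool" (infix "\<lesssim>" 50) where
  "d \<lesssim> x \<equiv> lrb_le join d x"

lemma lrb_le_upward:
  assumes "d \<in> S" "x \<in> S" "y \<in> S" "d \<lesssim> x" "x \<preceq> y"
  shows "d \<lesssim> y"
  using assms join_absorb_left join_assoc unfolding lrb_le_def by metis

lemma bounded_meet_join_eq:
  assumes "x \<in> S" "p \<in> S" "w \<in> S" "d \<in> S" "x \<preceq> w" "p \<preceq> w" "d \<lesssim> x"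
  shows "(w \<sqinter> (d \<squnion> p)) \<squnion> x = x \<squnion> p"
proof -
  have "w \<sqinter> (d \<squnion> p) \<preceq> w"
    using assms by simp
  then have "(w \<sqinter> (d \<squnion> p)) \<squnion> x = x \<squnion> (w \<sqinter> (d \<squnion> p))"
    using join_commute_bounded assms by (metis join_closed meet_closed)
  also have "\<dots> = (x \<squnion> w) \<sqinter> (x \<squnion> (d \<squnion> p))"
    using join_meet_distrib assms by simp
  also have "\<dots> = w \<sqinter> (x \<squnion> p)"
    using assms join_absorb_right join_assoc unfolding lrb_le_def by simp
  also have "\<dots> = x \<squnion> p"
    using assms join_least le_iff_meet' by simp
  finally show ?thesis .
qed

lemma join_meet_le_if_lrb_le:
  assumes "p \<in> S" "q \<in> S" "w \<in> S" "d \<in> S" "p \<preceq> w" "q \<preceq> w" "d \<lesssim> p" "d \<lesssim> q"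
  shows "(p \<sqinter> q) \<squnion> d \<preceq> p"
proof -
  define V where "V = w \<sqinter> (d \<squnion> p)"
  have V: "V \<in> S" "V \<preceq> w"
    using assms by (simp_all add: V_def)
  have r: "p \<sqinter> q \<in> S" "p \<sqinter> q \<preceq> w"
    using assms le_trans[of "p \<sqinter> q" p w] by simp_all
  have "(p \<sqinter> q) \<squnion> V = V \<squnion> (p \<sqinter> q)"
    using join_commute_bounded V r assms by blast
  also have "\<dots> = (V \<squnion> p) \<sqinter> (V \<squnion> q)"
    using join_meet_distrib V assms by simp
  also have "\<dots> = p \<sqinter> (q \<squnion> p)"
    using bounded_meet_join_eq[of p p w d] bounded_meet_join_eq[of q p w d] assms
    unfolding V_def by simp
  also have "\<dots> = p"
    using assms join_commute_bounded[of p q w] le_join le_iff_meet by metis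
  finally have "p = ((p \<sqinter> q) \<squnion> w) \<sqinter> ((p \<sqinter> q) \<squnion> d \<squnion> p)"
    using join_meet_distrib join_assoc assms r unfolding V_def by simp
  then have "p \<preceq> (p \<sqinter> q) \<squnion> d \<squnion> p"
    using assms r by (metis join_closed meet_le2)
  moreover have "p \<squnion> ((p \<sqinter> q) \<squnion> d) = p"
    using assms join_absorb_left join_assoc unfolding lrb_le_def by (metis meet_closed meet_le1)
  ultimately show ?thesis
    using le_if_join_absorbs assms r by simp
qed

lemma lrb_le_meet_bounded:
  assumes "p \<in> S" "q \<in> S" "w \<in> S" "d \<in> S" "p \<preceq> w" "q \<preceq> w" "d \<lesssim> p" "d \<lesssim> q"
  shows "d \<lesssim> p \<sqinter> q"
proof -
  have "(p \<sqinter> q) \<squnion> d \<preceq> p \<sqinter> q"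
    using join_meet_le_if_lrb_le[of p q w d] join_meet_le_if_lrb_le[of q p w d] assms
    by (simp add: le_meet_iff meet_commute)
  then show ?thesis
    using assms le_join le_antisym unfolding lrb_le_def by (metis join_closed meet_closed)
qed

lemma join_vee_distrib:
  assumes "a \<in> S" "b \<in> S" "c \<in> S"
  shows "a \<squnion> (b \<curlyvee> c) = (a \<squnion> b) \<curlyvee> (a \<squnion> c)"
proof -
  have "a \<squnion> b \<squnion> (a \<squnion> c) = a \<squnion> (b \<squnion> c)" "a \<squnion> c \<squnion> (a \<squnion> b) = a \<squnion> (c \<squnion> b)"
    using assms join_assoc join_join_left by (metis join_closed)+
  then show ?thesis
    using join_meet_distrib assms by simp
qed

lemma lrb_le_meet_if_lrb_le_vee:
  assumes "x \<in> S" "y \<in> S" "d \<in> S" "d \<lesssim> x" "d \<lesssim> y" "d \<lesssim> x \<curlyvee> y"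
  shows "d \<lesssim> x \<sqinter> y"
proof -
  have "d \<lesssim> x \<sqinter> (x \<curlyvee> y)"
    using lrb_le_meet_bounded[of x "x \<curlyvee> y" "x \<squnion> y" d] assms le_join by simp
  moreover have "d \<lesssim> y \<sqinter> (x \<curlyvee> y)"
    using lrb_le_meet_bounded[of y "x \<curlyvee> y" "y \<squnion> x" d] assms le_join by simp
  ultimately have "d \<lesssim> (x \<sqinter> (x \<curlyvee> y)) \<sqinter> (y \<sqinter> (x \<curlyvee> y))"
    using lrb_le_meet_bounded[of _ _ "x \<curlyvee> y" d] assms by simp
  moreover have "(x \<sqinter> (x \<curlyvee> y)) \<sqinter> (y \<sqinter> (x \<curlyvee> y)) = x \<sqinter> y"
    using meet_le_vee[of x y] assms by (simp add: le_iff_meet meet_ac)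
  ultimately show ?thesis
    by simp
qed

lemma lrb_le_vee_trans:
  assumes "a \<in> S" "b \<in> S" "c \<in> S" "d \<in> S"
    and "d \<lesssim> a" "d \<lesssim> b" "d \<lesssim> c" "d \<lesssim> a \<curlyvee> b" "d \<lesssim> b \<curlyvee> c"
  shows "d \<lesssim> a \<curlyvee> c"
proof -
  have "d \<lesssim> a \<sqinter> b" "d \<lesssim> b \<sqinter> c"
    using lrb_le_meet_if_lrb_le_vee assms by blast+
  then have "d \<lesssim> (a \<sqinter> b) \<sqinter> (b \<sqinter> c)"
    using lrb_le_meet_bounded[of "a \<sqinter> b" "b \<sqinter> c" b d] assms by simp
  moreover have "(a \<sqinter> b) \<sqinter> (b \<sqinter> c) \<preceq> a \<curlyvee> c"
  proof -
    have "(a \<sqinter> b) \<sqinter> (b \<sqinter> c) \<preceq> a \<sqinter> c"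
      using assms by (simp add: le_iff_meet meet_ac)
    then show ?thesis
      using le_trans[OF _ _ _ _ meet_le_vee[of a c]] assms by simp
  qed
  ultimately show ?thesis
    using lrb_le_upward[of d "(a \<sqinter> b) \<sqinter> (b \<sqinter> c)" "a \<curlyvee> c"] assms by simp
qed

theorem vee_algebra: "vee_algebra S (\<curlyvee>)"
proof -
  have "left_regular_band S (vee_join (\<curlyvee>))"
    unfolding left_regular_band_def by (simp add: vee_join_eq_join join_assoc join_join_left)
  moreover have "a \<curlyvee> b \<squnion> (a \<squnion> b) = a \<squnion> b" if "a \<in> S" "b \<in> S" for a b
    using join_absorb_right[of "a \<curlyvee> b" "a \<squnion> b"] that by simp
  moreover have "lrb_le (vee_join (\<curlyvee>)) d a \<longleftrightarrow> d \<lesssim> a" if "a \<in> S" "d \<in> S" for a d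
    using that by (simp add: lrb_le_def vee_join_eq_join)
  ultimately show ?thesis
    unfolding vee_algebra_def
    using lrb_le_vee_trans join_vee_distrib by (simp add: vee_join_eq_join meet_commute)
qed

end

definition override :: "('x \<times> 'y) set \<Rightarrow> ('x \<times> 'y) set \<Rightarrow> ('x \<times> 'y) set" where
  "override f g = f \<union> rdiff g f"

lemma runion_commute: "runion f g = runion g f"
  unfolding runion_def by blast

lemma runion_idem: "runion f f = f"
  unfolding runion_def rdiff_def by blast

lemma single_valued_runion: "single_valued f \<Longrightarrow> single_valued g \<Longrightarrow> single_valued (runion f g)"
  unfolding runion_def rdiff_def single_valued_def by (auto simp: Domain_iff)

lemma single_valued_override:
  "single_valued f \<Longrightarrow> single_valued g \<Longrightarrow> single_valued (override f g)"
  unfolding override_def rdiff_def single_valued_def by (auto simp: Domain_iff)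

lemma runion_runion_self:
  "single_valued f \<Longrightarrow> single_valued g \<Longrightarrow> runion f (runion f g) = override f g"
  unfolding runion_def rdiff_def override_def single_valued_def by (auto simp: Domain_iff) blast+

lemma override_assoc: "override f (override g h) = override (override f g) h"
  unfolding override_def rdiff_def by (auto simp: Domain_iff)

lemma override_idem: "override f f = f"
  unfolding override_def rdiff_def by auto

lemma override_override_self: "override (override f g) f = override f g"
  unfolding override_def rdiff_def by (auto simp: Domain_iff)

lemma override_runion_override:
  "single_valued f \<Longrightarrow> single_valued g \<Longrightarrow> override (runion f g) (override f g) = override f g"
  unfolding runion_def rdiff_def override_def single_valued_def by (auto simp: Domain_iff; metis)

lemma override_runion_distrib:
  "single_valued f \<Longrightarrow> single_valued g \<Longrightarrow> single_valued h \<Longrightarrow>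
   override f (runion g h) = runion (override f g) (override f h)"
  unfolding runion_def rdiff_def override_def single_valued_def by (auto simp: Domain_iff)

lemma override_eq_left_iff: "override f g = f \<longleftrightarrow> Domain g \<subseteq> Domain f"
  unfolding override_def rdiff_def by (auto simp: Domain_iff)

lemma Domain_subset_runion_trans:
  assumes "single_valued g"
    and "D \<subseteq> Domain f" "D \<subseteq> Domain g" "D \<subseteq> Domain h"
    and "D \<subseteq> Domain (runion f g)" "D \<subseteq> Domain (runion g h)"
  shows "D \<subseteq> Domain (runion f h)"
  using assms unfolding runion_def rdiff_def single_valued_def by (auto simp: Domain_iff subset_iff) blast

theorem vee_algebra_runion: "vee_algebra {f. single_valued f} runion"
proof -
  let ?T = "{f :: ('x \<times> 'y) set. single_valued f}"
  have join: "vee_join runion f g = override f g" if "single_valued f" "single_valued g" for f g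
    using that unfolding vee_join_def by (rule runion_runion_self)
  have le: "lrb_le (vee_join runion) d f \<longleftrightarrow> Domain d \<subseteq> Domain f"
    if "single_valued f" "single_valued d" for f d
    using that override_eq_left_iff unfolding lrb_le_def by (simp add: join)
  have "left_regular_band ?T (vee_join runion)"
    unfolding left_regular_band_def
    by (simp add: join override_assoc override_idem override_override_self single_valued_override)
  then show ?thesis
    unfolding vee_algebra_def
  proof (intro conjI ballI impI)
    fix f g :: "('x \<times> 'y) set" assume "f \<in> ?T" "g \<in> ?T"
    then show "vee_join runion (runion f g) (vee_join runion f g) = vee_join runion f g"
      by (simp add: join single_valued_runion single_valued_override override_runion_override)
  next
    fix f g h :: "('x \<times> 'y) set" assume "f \<in> ?T" "g \<in> ?T" "h \<in> ?T"
    then show "vee_join runion f (runion g h) = runion (vee_join runion f g) (vee_join runion f h)"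
      by (simp add: join single_valued_runion override_runion_distrib)
  next
    fix f g h d :: "('x \<times> 'y) set" assume "f \<in> ?T" "g \<in> ?T" "h \<in> ?T" "d \<in> ?T"
      and "lrb_le (vee_join runion) d f \<and> lrb_le (vee_join runion) d g \<and>
        lrb_le (vee_join runion) d h \<and> lrb_le (vee_join runion) d (runion f g) \<and>
        lrb_le (vee_join runion) d (runion g h)"
    then show "lrb_le (vee_join runion) d (runion f h)"
      using Domain_subset_runion_trans[of g "Domain d" f h] by (simp add: le single_valued_runion)
  qed (simp_all add: single_valued_runion runion_commute runion_idem)
qed

lemma vee_algebra_embedding:
  assumes T: "vee_algebra T w" and inj: "inj_on h S" and hS: "h ` S \<subseteq> T"
    and closed: "\<And>a b. a \<in> S \<Longrightarrow> b \<in> S \<Longrightarrow> v a b \<in> S"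
    and hom: "\<And>a b. a \<in> S \<Longrightarrow> b \<in> S \<Longrightarrow> h (v a b) = w (h a) (h b)"
  shows "vee_algebra S v"
proof -
  have eq: "a = b \<longleftrightarrow> h a = h b" if "a \<in> S" "b \<in> S" for a b
    using inj that by (meson inj_on_eq_iff)
  have vee_join_closed: "vee_join v a b \<in> S" if "a \<in> S" "b \<in> S" for a b
    using closed that unfolding vee_join_def by blast
  have hom_join: "h (vee_join v a b) = vee_join w (h a) (h b)" if "a \<in> S" "b \<in> S" for a b
    using closed hom that unfolding vee_join_def by simp
  have le: "lrb_le (vee_join v) d a \<longleftrightarrow> lrb_le (vee_join w) (h d) (h a)" if "a \<in> S" "d \<in> S" for a d
    using eq vee_join_closed hom_join that unfolding lrb_le_def by metis
  have hT: "h a \<in> T" if "a \<in> S" for a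
    using hS that by blast
  note T' = T[unfolded vee_algebra_def left_regular_band_def Ball_def]
  have T_trans: "lrb_le (vee_join w) d (w a c)"
    if "a \<in> T" "b \<in> T" "c \<in> T" "d \<in> T" "lrb_le (vee_join w) d a" "lrb_le (vee_join w) d b"
      "lrb_le (vee_join w) d c" "lrb_le (vee_join w) d (w a b)" "lrb_le (vee_join w) d (w b c)"
    for a b c d
    using T that unfolding vee_algebra_def by blast
  have "left_regular_band S (vee_join v)"
    unfolding left_regular_band_def
    using T' by (simp add: eq vee_join_closed hom_join hT)
  then show ?thesis
    unfolding vee_algebra_def
  proof (intro conjI ballI impI)
    fix a b assume "a \<in> S" "b \<in> S"
    moreover have "vee_join w (w x y) (vee_join w x y) = vee_join w x y" if "x \<in> T" "y \<in> T" for x y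
      using T that unfolding vee_algebra_def by blast
    ultimately show "vee_join v (v a b) (vee_join v a b) = vee_join v a b"
      by (simp add: eq closed vee_join_closed hom hom_join hT)
  next
    fix a b c d assume "a \<in> S" "b \<in> S" "c \<in> S" "d \<in> S"
      and "lrb_le (vee_join v) d a \<and> lrb_le (vee_join v) d b \<and> lrb_le (vee_join v) d c \<and>
        lrb_le (vee_join v) d (v a b) \<and> lrb_le (vee_join v) d (v b c)"
    then show "lrb_le (vee_join v) d (v a c)"
      using T_trans[of "h a" "h b" "h c" "h d"] by (simp add: le closed hom hT)
  qed (use T' in \<open>simp_all add: eq closed vee_join_closed hom hom_join hT\<close>)
qed

theorem corollary3p10:
  shows "(\<forall>(S :: 'a set) meet join. ado_semilattice S meet join \<longrightarrow>
            vee_algebra S (\<lambda>a b. meet (join a b) (join b a)))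
       \<and> (\<forall>(S :: 'b set) v (X :: 'x set) (Y :: 'y set) A h.
            functional_vee_algebra S v X Y A h \<longrightarrow> vee_algebra S v)"
proof (intro conjI allI impI)
  fix S :: "'a set" and meet join
  assume "ado_semilattice S meet join"
  then interpret ado_slattice S meet join
    by unfold_locales (auto simp: ado_semilattice_def)
  show "vee_algebra S (\<lambda>a b. meet (join a b) (join b a))"
    by (rule vee_algebra)
next
  fix S :: "'b set" and v and X :: "'x set" and Y :: "'y set" and A h
  assume "functional_vee_algebra S v X Y A h"
  then show "vee_algebra S v"
    unfolding functional_vee_algebra_def Par_def bij_betw_def
    by (intro vee_algebra_embedding[OF vee_algebra_runion, of h]) auto
qed

end
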